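(* Let $m\ge1$ be an integer and $f(z)=\sum_{n\ge0}a_nz^{-n/m}$ a Gevrey-1 series whose Borel transform $\widetilde f(\zeta)=\sum_{n\ge1}\frac{a_n\zeta^{n/m-1}}{\Gamma(n/m)}$ extends analytically to $\Omega^\star$ with $|\widetilde f(\zeta)\zeta^{\frac{m-1}{m}}|\le Ae^{B|\zeta|}$ for all $\zeta\in\Omega^\star$, for some $A>0$, $B>0$. Define $d_n$ ($n\ge1$) by: for $l=1,\dots,m$, $\widetilde g_l(\xi)=\big(\frac{\xi}{1-e^{-\xi}}\big)^{\frac lm-1}\sum_{k\ge0}\frac{a_{l+mk}\xi^k}{\Gamma(\frac lm+k)}$ (principal branch, extended holomorphically to $\Delta$) and $\widetilde g_l(-\ln s)=\sum_{j\ge0}d_{l+mj}(1-s)^j$ for $s\in D(1,1)$. Then for every $C>\max(B,1)$ the series $\sum_{n\ge1}\frac{|d_n|}{(n/m)^C}$ converges.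
   Context: $\Delta$ is the image of the open disc $D(1,1)=\{s:|s-1|<1\}$ under $s\mapsto-\ln s$ (principal logarithm); $\Delta^\star=\Delta\setminus\{0\}$. $\mathbb{C}_m^\star$ is the $m$-sheeted covering of $\mathbb{C}^\star$ (points $(|x|,\arg x)$, $\arg x\in\mathbb{R}/2\pi m\mathbb{Z}$, projection $\pi(x)=|x|e^{i\arg x}$; $x^{k/m}$ has modulus $|x|^{k/m}$ and argument $\frac km\arg x$), and $\Omega^\star=\pi^{-1}(\Delta^\star)$. Gevrey-1 means $|a_n|\le CK^n\Gamma(1+n/m)$. *)

theory Defs
  imports "HOL-Analysis.Analysis"
begin

definition Delta :: "complex set" where
  "Delta = (\<lambda>s. - Ln s) ` ball 1 1"

text \<open>Omega* in logarithmic coordinates: a point x of the m-sheeted covering of C*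
  (modulus |x|, argument arg x in R / 2 pi m Z) is represented by w = ln |x| + i arg x,
  taken modulo 2 pi i m, so that pi(x) = exp w and x^(k/m) = exp((k/m) w).
  Omega* = pi^-1(Delta*) corresponds to the set below.\<close>
definition Omega_log :: "complex set" where
  "Omega_log = {w. exp w \<in> Delta - {0}}"

definition gevrey1 :: "nat \<Rightarrow> (nat \<Rightarrow> complex) \<Rightarrow> bool" where
  "gevrey1 m a \<longleftrightarrow> (\<exists>C K. \<forall>n. norm (a n) \<le> C * K ^ n * Gamma (1 + real n / real m))"

end

(*
  For l = 1..m, filtering the Borel series with the characters j |-> exp (-2 pi i j l / m) of Z/mZ,
  Phi_l w = (1/m) * sum_{j<m} exp (-2 pi i j l / m) * F (w + 2 pi i j)   (residue_component l w)
  keeps only the coefficients a (l + m k), so near xi = exp w = 0 it equals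
  exp ((l/m - 1) w) * sum_k a (l + m k) xi^k / Gamma (l/m + k). Comparing with the germ of G_l and
  taking m-th powers, which removes the branch of the fractional power, gives
      G_l xi ^ m * (xi / (1 - exp (- xi))) ^ (m - l) = xi ^ (m - l) * Phi_l w ^ m,
  first near 0 and then on all of Omega* by analytic continuation. Since |1 - exp (- xi)| < 1 on Delta,
  |G_l xi| <= |Phi_l w| <= A exp (B |xi|) |xi|^(-(m-1)/m), and for xi = - Ln s with |1 - s| >= 1/2
  this is O(|s|^(-beta)) for every beta >= B. Cauchy's formula on the circle of radius 1 - 1/(j+2)
  then gives d (l + m j) = O(j^(beta - 1)), and any beta with max B 1 < beta < C makes
  sum_n |d n| / (n/m)^C converge.
*)

theory Submission
  imports Defs "HOL-Complex_Analysis.Complex_Analysis" "HOL-Library.Real_Mod"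
begin

section \<open>The domains Delta and Omega_log\<close>

lemma mem_ball_1_1_iff: "z \<in> ball (1::complex) 1 \<longleftrightarrow> (norm z)\<^sup>2 < 2 * Re z"
proof -
  have "(dist 1 z)\<^sup>2 = (norm z)\<^sup>2 - 2 * Re z + 1"
    by (simp only: dist_norm cmod_power2) (simp add: power2_eq_square algebra_simps)
  moreover have "z \<in> ball 1 1 \<longleftrightarrow> (dist 1 z)\<^sup>2 < 1"
    using abs_square_less_1[of "dist 1 z"] by (simp add: dist_commute)
  ultimately show ?thesis by linarith
qed

lemma exp_mem_ball_1_1_iff: "exp w \<in> ball (1::complex) 1 \<longleftrightarrow> exp (Re w) < 2 * cos (Im w)"
proof -
  have "(norm (exp w))\<^sup>2 < 2 * Re (exp w) \<longleftrightarrow> exp (Re w) * exp (Re w) < exp (Re w) * (2 * cos (Im w))"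
    by (simp add: power2_eq_square Re_exp algebra_simps)
  then show ?thesis using mem_ball_1_1_iff by simp
qed

lemma Delta_eq: "Delta = {\<xi>. \<bar>Im \<xi>\<bar> < pi \<and> exp (- \<xi>) \<in> ball 1 1}"
proof (intro set_eqI iffI)
  fix \<xi> assume "\<xi> \<in> Delta"
  then obtain s where s: "s \<in> ball 1 1" "\<xi> = - Ln s" by (auto simp: Delta_def)
  then have "s \<noteq> 0" "0 < Re s"
    using mem_ball_1_1_iff[of s] by (auto, smt (verit) zero_le_power2)
  from \<open>0 < Re s\<close> have "\<bar>Im (Ln s)\<bar> < pi/2" by (rule Re_Ln_pos_lt_imp)
  with s \<open>s \<noteq> 0\<close> show "\<xi> \<in> {\<xi>. \<bar>Im \<xi>\<bar> < pi \<and> exp (- \<xi>) \<in> ball 1 1}"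
    by auto
next
  fix \<xi> assume "\<xi> \<in> {\<xi>. \<bar>Im \<xi>\<bar> < pi \<and> exp (- \<xi>) \<in> ball 1 1}"
  then have "\<bar>Im \<xi>\<bar> < pi" "exp (- \<xi>) \<in> ball 1 1" by auto
  moreover from this have "\<xi> = - Ln (exp (- \<xi>))" by (subst Ln_exp) auto
  ultimately show "\<xi> \<in> Delta" unfolding Delta_def by blast
qed

lemma open_Delta: "open Delta"
proof -
  have "Delta = {\<xi>. \<bar>Im \<xi>\<bar> < pi} \<inter> (\<lambda>\<xi>. exp (- \<xi>)) -` ball 1 1"
    by (auto simp: Delta_eq)
  moreover have "open {\<xi>::complex. \<bar>Im \<xi>\<bar> < pi}"
    by (intro open_Collect_less continuous_intros)
  moreover have "open ((\<lambda>\<xi>::complex. exp (- \<xi>)) -` ball 1 1)"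
    by (intro open_vimage continuous_intros) auto
  ultimately show ?thesis by (metis open_Int)
qed

lemma exp_minus_neq_1_in_Delta:
  assumes "\<xi> \<in> Delta" "\<xi> \<noteq> 0" shows "exp (- \<xi>) \<noteq> 1"
proof
  assume "exp (- \<xi>) = 1"
  moreover have "Ln (exp (- \<xi>)) = - \<xi>"
    using assms(1) by (intro Ln_exp) (auto simp: Delta_eq)
  ultimately show False using assms(2) by simp
qed

lemma convex_on_minus_ln_cos: "convex_on {-(pi/2)<..<pi/2} (\<lambda>y. - ln (cos y))"
proof (rule convex_on_realI[where f'=tan])
  fix x :: real assume "x \<in> {-(pi/2)<..<pi/2}"
  then have "cos x > 0" by (auto intro: cos_gt_zero_pi)
  then show "((\<lambda>y. - ln (cos y)) has_real_derivative tan x) (at x)"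
    by (auto intro!: derivative_eq_intros simp: tan_def)
next
  fix x y :: real assume "x \<in> {-(pi/2)<..<pi/2}" "y \<in> {-(pi/2)<..<pi/2}" "x \<le> y"
  then show "tan x \<le> tan y"
    by (cases "x = y") (auto intro!: less_imp_le[OF tan_monotone])
qed simp

lemma cos_powr_le_cos_mult:
  assumes "\<bar>y\<bar> < pi/2" "0 \<le> t" "t \<le> 1"
  shows "cos y powr t \<le> cos (t * y)"
proof -
  have y: "y \<in> {-(pi/2)<..<pi/2}" using assms by (auto simp: abs_less_iff)
  have "- ln (cos ((1 - t) *\<^sub>R 0 + t *\<^sub>R y)) \<le> (1 - t) * (- ln (cos 0)) + t * (- ln (cos y))"
    using convex_onD[OF convex_on_minus_ln_cos, of t 0 y, OF assms(2,3) _ y] by simp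
  then have "t * ln (cos y) \<le> ln (cos (t * y))" by simp
  moreover have "cos y > 0" using y by (auto intro: cos_gt_zero_pi)
  moreover have "cos (t * y) > 0"
  proof -
    have "\<bar>t * y\<bar> \<le> \<bar>y\<bar>" using assms by (simp add: abs_mult mult_left_le_one_le)
    then show ?thesis using assms(1) by (intro cos_gt_zero_pi) linarith+
  qed
  ultimately show ?thesis by (simp add: powr_def ln_ge_iff)
qed

lemma cos_pos_imp_abs_lt_pi_half:
  assumes "cos y > 0" "\<bar>y\<bar> < pi" shows "\<bar>y\<bar> < pi/2"
proof (rule ccontr)
  assume "\<not> \<bar>y\<bar> < pi/2"
  then have "cos \<bar>y\<bar> \<le> cos (pi/2)" using assms(2)
    by (intro cos_monotone_0_pi_le) auto
  then show False using assms(1) by simp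
qed

(* With xi = x + i y, membership in Delta reads exp (- x) < 2 cos y with |y| < pi/2, and scaling
   by t reduces to (2 cos y) powr t <= 2 cos (t y), i.e. to the concavity of ln cos. *)
lemma of_real_mult_mem_Delta:
  assumes "\<xi> \<in> Delta" "0 < t" "t \<le> 1"
  shows "of_real t * \<xi> \<in> Delta"
proof -
  define x y where "x = Re \<xi>" and "y = Im \<xi>"
  have y: "\<bar>y\<bar> < pi" and e: "exp (- x) < 2 * cos y"
    using assms(1) exp_mem_ball_1_1_iff[of "- \<xi>"] by (auto simp: Delta_eq x_def y_def)
  have "cos y > 0" using e exp_gt_zero[of "- x"] by linarith
  then have y2: "\<bar>y\<bar> < pi/2" using y cos_pos_imp_abs_lt_pi_half by blast
  have "exp (- (t * x)) = exp (- x) powr t"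
    by (simp add: powr_def)
  also have "\<dots> < (2 * cos y) powr t"
    using e assms(2) by (intro powr_less_mono2) auto
  also have "\<dots> = 2 powr t * cos y powr t"
    using \<open>cos y > 0\<close> by (simp add: powr_mult)
  also have "\<dots> \<le> 2 * cos (t * y)"
  proof (rule mult_mono)
    show "2 powr t \<le> (2::real)" using powr_mono[of t 1 2] assms by simp
    show "cos y powr t \<le> cos (t * y)" using cos_powr_le_cos_mult[OF y2] assms by simp
  qed (use \<open>cos y > 0\<close> in auto)
  finally have "exp (- (t * x)) < 2 * cos (t * y)" .
  moreover have "\<bar>t * y\<bar> < pi"
  proof -
    have "\<bar>t * y\<bar> \<le> \<bar>y\<bar>" using assms by (simp add: abs_mult mult_left_le_one_le)
    then show ?thesis using y by linarith
  qed
  ultimately show ?thesis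
    using exp_mem_ball_1_1_iff[of "- (of_real t * \<xi>)"] by (simp add: Delta_eq x_def y_def)
qed

lemma open_Omega_log: "open Omega_log"
proof -
  have "Omega_log = exp -` (Delta - {0})" by (auto simp: Omega_log_def)
  moreover have "open (Delta - {0})" using open_Delta by auto
  ultimately show ?thesis
    by (metis open_vimage continuous_on_exp[OF continuous_on_id])
qed

lemma exp_add_2pi_i_of_nat: "exp (w + 2 * pi * \<i> * of_nat j) = exp w"
proof -
  have "w + 2 * pi * \<i> * of_nat j = w + \<i> * (of_int (int j) * (of_real pi * 2))"
    by (simp add: algebra_simps)
  then show ?thesis by (simp only: exp_plus_2pin)
qed

lemma Omega_log_add_2pi_i: "w \<in> Omega_log \<Longrightarrow> w + 2 * pi * \<i> * of_nat j \<in> Omega_log"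
  by (simp only: Omega_log_def mem_Collect_eq exp_add_2pi_i_of_nat)

lemma Omega_logD:
  assumes "w \<in> Omega_log"
  shows "exp w \<in> Delta" "exp w \<noteq> 0" "1 - exp (- exp w) \<noteq> 0"
  using assms exp_minus_neq_1_in_Delta[of "exp w"] by (auto simp: Omega_log_def)

lemma Omega_log_diff_of_real:
  assumes "w \<in> Omega_log" "0 \<le> v"
  shows "w - of_real v \<in> Omega_log"
proof -
  have "exp (w - of_real v) = of_real (exp (- v)) * exp w"
    by (simp add: exp_diff exp_minus field_simps exp_of_real)
  moreover have "of_real (exp (- v)) * exp w \<in> Delta"
    using assms by (intro of_real_mult_mem_Delta) (auto simp: Omega_log_def)
  ultimately show ?thesis using assms(1) by (simp add: Omega_log_def)
qed

lemma third_le_norm_if_half_le_norm_one_minus_exp: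
  fixes z :: complex
  assumes "1/2 \<le> norm (1 - exp z)"
  shows "1/3 \<le> norm z"
proof (rule ccontr)
  assume "\<not> 1/3 \<le> norm z"
  then have "norm (exp z - 1) \<le> 3/2 * norm z"
    by (intro norm_exp_bounds(2)) simp
  also have "\<dots> < 1/2" using \<open>\<not> 1/3 \<le> norm z\<close> by simp
  finally show False using assms by (simp add: norm_minus_commute)
qed

lemma exp_mult_norm_Ln_le:
  assumes "s \<noteq> 0" "norm s < 2" "0 \<le> B" "B \<le> \<beta>"
  shows "exp (B * norm (Ln s)) \<le> exp (B * pi) * 4 powr \<beta> * norm s powr (-\<beta>)"
proof -
  define L where "L = - ln (norm s) + 2 * ln 2"
  have "Re (Ln s) = ln (norm s)" using assms(1) by (rule Re_Ln)
  moreover have "ln (norm s) < ln 2" using assms(1,2) by simp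
  moreover have "0 < ln (2::real)" by simp
  ultimately have "0 \<le> L" "\<bar>Re (Ln s)\<bar> \<le> L" unfolding L_def by arith+
  moreover have "\<bar>Im (Ln s)\<bar> \<le> pi"
    using mpi_less_Im_Ln[OF assms(1)] Im_Ln_le_pi[OF assms(1)] by simp
  ultimately have "B * norm (Ln s) \<le> B * (L + pi)"
    using cmod_le[of "Ln s"] assms(3) by (intro mult_left_mono) auto
  also have "\<dots> \<le> \<beta> * L + B * pi"
    using assms(4) \<open>0 \<le> L\<close> by (simp add: distrib_left mult_right_mono)
  finally have "exp (B * norm (Ln s)) \<le> exp (\<beta> * L + B * pi)" by simp
  also have "\<dots> = exp (B * pi) * 4 powr \<beta> * norm s powr (-\<beta>)"
  proof -
    have "ln (4::real) = 2 * ln 2" using ln_realpow[of 2 2] by simp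
    then show ?thesis
      using assms(1) by (simp add: L_def powr_def exp_add exp_diff algebra_simps exp_minus divide_inverse)
  qed
  finally show ?thesis .
qed

section \<open>Analytic continuation from a left half-plane\<close>

lemma holomorphic_vanishing_on_left_half_plane:
  assumes holo: "f holomorphic_on S" and "open S"
    and left: "\<And>w v. w \<in> S \<Longrightarrow> 0 \<le> v \<Longrightarrow> w - of_real v \<in> S"
    and zero: "\<And>w. w \<in> S \<Longrightarrow> Re w < c \<Longrightarrow> f w = 0"
    and w0: "w0 \<in> S"
  shows "f w0 = 0"
proof -
  define T where "T = connected_component_set S w0"
  have "open T" unfolding T_def using \<open>open S\<close> by (rule open_connected_component)
  have "T \<subseteq> S" unfolding T_def by (rule connected_component_subset)
  define z where "z = w0 - of_real (\<bar>Re w0\<bar> + \<bar>c\<bar> + 1)"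
  have seg: "closed_segment w0 z \<subseteq> S"
  proof
    fix x assume "x \<in> closed_segment w0 z"
    then obtain u where "0 \<le> u" "u \<le> 1" "x = w0 - of_real (u * (\<bar>Re w0\<bar> + \<bar>c\<bar> + 1))"
      by (auto simp: closed_segment_def z_def scaleR_conv_of_real algebra_simps)
    then show "x \<in> S" using left[OF w0, of "u * (\<bar>Re w0\<bar> + \<bar>c\<bar> + 1)"] by simp
  qed
  have "closed_segment w0 z \<subseteq> T"
    unfolding T_def by (rule connected_component_maximal[OF _ connected_segment seg]) simp
  then have "z \<in> T" by auto
  define U where "U = T \<inter> {w. Re w < c}"
  have "open U" unfolding U_def using \<open>open T\<close> by (intro open_Int open_halfspace_Re_lt)
  moreover have "z \<in> U" using \<open>z \<in> T\<close> by (simp add: U_def z_def)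
  ultimately have "z islimpt U" by (rule open_imp_islimpt)
  show ?thesis
  proof (rule analytic_continuation[of f T U z])
    show "f holomorphic_on T" using holo \<open>T \<subseteq> S\<close> by (rule holomorphic_on_subset)
    show "connected T" unfolding T_def by (rule connected_connected_component)
    show "\<And>w. w \<in> U \<Longrightarrow> f w = 0" using zero \<open>T \<subseteq> S\<close> by (auto simp: U_def)
    show "w0 \<in> T" unfolding T_def using w0 by simp
  qed (use \<open>open T\<close> \<open>z \<in> T\<close> \<open>z islimpt U\<close> in \<open>auto simp: U_def\<close>)
qed

section \<open>Residue classes of indices\<close>

lemma sum_cis_roots_of_unity:
  fixes k :: int assumes "m > 0"
  shows "(\<Sum>j<m. cis (2 * pi * real j * k / m)) = (if int m dvd k then of_nat m else 0)"
proof -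
  define z where "z = cis (2 * pi * k / m)"
  have powers: "cis (2 * pi * real j * k / m) = z ^ j" for j
    unfolding z_def Complex.DeMoivre by (simp add: field_simps)
  have "z ^ m = 1"
    using assms by (simp add: z_def Complex.DeMoivre)
  moreover have "z = 1 \<longleftrightarrow> int m dvd k"
  proof -
    have "z = 1 \<longleftrightarrow> (\<exists>n. real_of_int k = real m * of_int n)"
      using assms by (auto simp: z_def cis_eq_1_iff field_simps)
    also have "\<dots> \<longleftrightarrow> int m dvd k"
      by (metis dvd_def of_int_eq_iff of_int_mult of_int_of_nat_eq)
    finally show ?thesis .
  qed
  ultimately show ?thesis
    by (simp add: powers sum_gp_strict)
qed

lemma sums_residue_class:
  fixes c s :: "nat \<Rightarrow> complex"
  assumes r: "r < m"
    and twisted: "\<And>j. j < m \<Longrightarrow> (\<lambda>n. c n * cis (2 * pi * j * n / m)) sums s j"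
  shows "(\<lambda>k. c (r + m * k)) sums ((\<Sum>j<m. cis (- 2 * pi * j * r / m) * s j) / m)"
proof -
  have filter: "(\<Sum>j<m. cis (- 2 * pi * j * r / m) * (c n * cis (2 * pi * j * n / m))) / m
      = (if n mod m = r then c n else 0)" for n
  proof -
    have "cis (- 2 * pi * j * r / m) * cis (2 * pi * j * n / m)
        = cis (2 * pi * real j * real_of_int (int n - int r) / m)" for j
      by (simp add: cis_mult diff_divide_distrib[symmetric] algebra_simps)
    moreover have "int m dvd (int n - int r) \<longleftrightarrow> n mod m = r"
      using r by (metis mod_eq_dvd_iff mod_less of_nat_eq_iff zmod_int)
    ultimately show ?thesis
      using r sum_cis_roots_of_unity[of m "int n - int r"]
      by (simp add: sum_distrib_left[symmetric] mult.left_commute[of _ "c n"])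
  qed
  have "(\<lambda>n. if n mod m = r then c n else 0) sums ((\<Sum>j<m. cis (- 2 * pi * j * r / m) * s j) / m)"
    unfolding filter[symmetric] by (intro sums_divide sums_sum sums_mult twisted) simp
  moreover have "strict_mono (\<lambda>k. r + m * k)"
    using r by (auto simp: strict_mono_def)
  moreover have "n \<in> range (\<lambda>k. r + m * k)" if "n mod m = r" for n
    using that by (metis add.commute div_mult_mod_eq mult.commute rangeI)
  ultimately have "(\<lambda>k. if (r + m * k) mod m = r then c (r + m * k) else 0)
      sums ((\<Sum>j<m. cis (- 2 * pi * j * r / m) * s j) / m)"
    by (subst sums_mono_reindex) auto
  then show ?thesis using r by simp
qed

lemma powr_bound_if_residue_classes_bounded:
  fixes d :: "nat \<Rightarrow> 'a::real_normed_vector"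
  assumes m: "m \<ge> 1" and "0 \<le> \<gamma>"
    and bound: "\<And>l. l \<in> {1..m} \<Longrightarrow> \<exists>K. \<forall>j. norm (d (l + m * j)) \<le> K * (real j + 2) powr \<gamma>"
  shows "\<exists>K. \<forall>n. norm (d (Suc n)) \<le> K * real (Suc n) powr \<gamma>"
proof -
  obtain K where K: "\<And>l j. l \<in> {1..m} \<Longrightarrow> norm (d (l + m * j)) \<le> K l * (real j + 2) powr \<gamma>"
    using bound by metis
  define K0 where "K0 = (\<Sum>l\<in>{1..m}. \<bar>K l\<bar>)"
  have "norm (d (Suc n)) \<le> K0 * 2 powr \<gamma> * real (Suc n) powr \<gamma>" for n
  proof -
    define l where "l = n mod m + 1"
    have "n mod m < m" using m by simp
    then have l: "l \<in> {1..m}" by (auto simp: l_def)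
    have "Suc n = l + m * (n div m)" by (simp add: l_def)
    then have "norm (d (Suc n)) \<le> K l * (real (n div m) + 2) powr \<gamma>"
      using K[OF l] by metis
    also have "\<dots> \<le> K0 * (2 * real (Suc n)) powr \<gamma>"
    proof (rule mult_mono)
      have "\<bar>K l\<bar> \<le> K0" unfolding K0_def using l by (intro member_le_sum) auto
      then show "K l \<le> K0" by linarith
      have "real (n div m) + 2 \<le> real n + 2" by (simp add: div_le_dividend)
      also have "\<dots> \<le> 2 * real (Suc n)" by simp
      finally show "(real (n div m) + 2) powr \<gamma> \<le> (2 * real (Suc n)) powr \<gamma>"
        by (rule powr_mono2[OF \<open>0 \<le> \<gamma>\<close>, rotated]) simp
    qed (auto simp: K0_def)
    also have "\<dots> = K0 * 2 powr \<gamma> * real (Suc n) powr \<gamma>"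
      using powr_mult[of 2 "real (Suc n)" \<gamma>] by (simp only: mult.assoc)
    finally show ?thesis .
  qed
  then show ?thesis by blast
qed

lemma summable_norm_div_powr_if_residue_classes_bounded:
  fixes d :: "nat \<Rightarrow> 'a::real_normed_vector"
  assumes m: "m \<ge> 1"
    and bound: "\<And>l. l \<in> {1..m} \<Longrightarrow> \<exists>K. \<forall>j. norm (d (l + m * j)) \<le> K * (real j + 2) powr \<gamma>"
    and "0 \<le> \<gamma>" "\<gamma> + 1 < C"
  shows "summable (\<lambda>n. norm (d (Suc n)) / (real (Suc n) / real m) powr C)"
proof -
  obtain K where "\<And>n. norm (d (Suc n)) \<le> K * real (Suc n) powr \<gamma>"
    using powr_bound_if_residue_classes_bounded[OF m \<open>0 \<le> \<gamma>\<close> bound] by blast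
  then have termwise: "norm (d (Suc n)) / (real (Suc n) / real m) powr C
      \<le> K * real m powr C * real (Suc n) powr (\<gamma> - C)" for n
    using m by (simp add: powr_divide powr_diff divide_right_mono field_simps)
  have "summable (\<lambda>n. real n powr (\<gamma> - C))"
    using \<open>\<gamma> + 1 < C\<close> by (subst summable_real_powr_iff) simp
  then have "summable (\<lambda>n. K * real m powr C * real (Suc n) powr (\<gamma> - C))"
    by (intro summable_mult) (subst summable_Suc_iff)
  then show ?thesis
    by (rule summable_comparison_test') (use termwise in simp)
qed

section \<open>Cauchy estimates for singular power series\<close>

lemma two_div_pi_mult_le_sin:
  assumes "0 \<le> x" "x \<le> pi/2"
  shows "2 / pi * x \<le> sin x"
proof -
  have concave: "convex_on {0..pi/2} (\<lambda>x. - sin x)"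
  proof (rule convex_on_realI[where f'="\<lambda>x. - cos x"])
    fix x :: real show "((\<lambda>x. - sin x) has_real_derivative - cos x) (at x)"
      by (auto intro!: derivative_eq_intros)
  next
    fix x y :: real assume "x \<in> {0..pi/2}" "y \<in> {0..pi/2}" "x \<le> y"
    then show "- cos x \<le> - cos y" by (simp add: cos_monotone_0_pi_le)
  qed simp
  define t where "t = 2 / pi * x"
  have t: "0 \<le> t" "t \<le> 1" using assms pi_gt_zero by (auto simp: t_def field_simps)
  have "- sin ((1 - t) *\<^sub>R 0 + t *\<^sub>R (pi/2)) \<le> (1 - t) * (- sin 0) + t * (- sin (pi/2))"
    by (rule convex_onD[OF concave t]) auto
  moreover have "t * (pi/2) = x" by (simp add: t_def)
  ultimately show ?thesis by (simp add: t_def)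
qed

lemma norm_one_minus_of_real_mult_exp_squared:
  fixes r \<theta> :: real
  shows "(norm (1 - of_real r * exp (\<i> * of_real \<theta>)))\<^sup>2 = (1 - r)\<^sup>2 + 4 * r * (sin (\<theta>/2))\<^sup>2"
proof -
  have "(norm (1 - of_real r * exp (\<i> * of_real \<theta>)))\<^sup>2 = (1 - r * cos \<theta>)\<^sup>2 + (r * sin \<theta>)\<^sup>2"
    unfolding cmod_power2 by (simp add: Re_exp Im_exp)
  also have "\<dots> = 1 - 2 * r * cos \<theta> + r\<^sup>2 * ((sin \<theta>)\<^sup>2 + (cos \<theta>)\<^sup>2)"
    by algebra
  also have "\<dots> = (1 - r)\<^sup>2 + 2 * r * (1 - cos \<theta>)"
    by (simp add: power2_eq_square algebra_simps)
  finally show ?thesis using cos_double_sin[of "\<theta>/2"] by simp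
qed

lemma norm_one_minus_of_real_mult_exp_ge:
  fixes r \<theta> :: real
  assumes r: "1/2 \<le> r" "r < 1" and \<theta>: "0 \<le> \<theta>" "\<theta> \<le> 2 * pi"
  shows "((1 - r) + min \<theta> (2 * pi - \<theta>)) / pi \<le> norm (1 - of_real r * exp (\<i> * of_real \<theta>))"
proof -
  define \<phi> where "\<phi> = min \<theta> (2 * pi - \<theta>)"
  have \<phi>: "0 \<le> \<phi>" "\<phi> \<le> pi" using \<theta> by (auto simp: \<phi>_def)
  have "sin (\<theta>/2) = sin (\<phi>/2)"
  proof (cases "\<theta> \<le> 2 * pi - \<theta>")
    case False
    then have "\<phi>/2 = pi - \<theta>/2" by (simp add: \<phi>_def)
    then show ?thesis by (simp only: sin_pi_minus)
  qed (simp add: \<phi>_def)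
  moreover have "2 / pi * (\<phi>/2) \<le> sin (\<phi>/2)" using \<phi> by (intro two_div_pi_mult_le_sin) auto
  ultimately have sin_half: "\<phi> / pi \<le> sin (\<theta>/2)" by simp
  note norm_sq = norm_one_minus_of_real_mult_exp_squared[of r \<theta>]
  have sq_sum: "(((1 - r) + \<phi>) / pi)\<^sup>2 \<le> 2 * ((1 - r) / pi)\<^sup>2 + 2 * (\<phi> / pi)\<^sup>2"
    using sum_squares_bound[of "(1 - r) / pi" "\<phi> / pi"] by (simp add: add_divide_distrib power2_sum)
  have "2 * ((1 - r) / pi)\<^sup>2 \<le> (1 - r)\<^sup>2"
  proof -
    have "3\<^sup>2 \<le> pi\<^sup>2" using pi_gt3 by (intro power_mono) auto
    then have "2 * (1 - r)\<^sup>2 \<le> pi\<^sup>2 * (1 - r)\<^sup>2" by (intro mult_right_mono) auto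
    then show ?thesis by (simp add: power_divide field_simps)
  qed
  moreover have "2 * (\<phi> / pi)\<^sup>2 \<le> 4 * r * (sin (\<theta>/2))\<^sup>2"
  proof -
    have "(\<phi> / pi)\<^sup>2 \<le> (sin (\<theta>/2))\<^sup>2" using sin_half \<phi> by (intro power_mono) auto
    moreover have "2 * (sin (\<theta>/2))\<^sup>2 \<le> 4 * r * (sin (\<theta>/2))\<^sup>2" using r by (intro mult_right_mono) auto
    ultimately show ?thesis by linarith
  qed
  ultimately have "(((1 - r) + \<phi>) / pi)\<^sup>2 \<le> (norm (1 - of_real r * exp (\<i> * of_real \<theta>)))\<^sup>2"
    using sq_sum norm_sq by linarith
  then show ?thesis unfolding \<phi>_def[symmetric] by (rule power2_le_imp_le) simp
qed

lemma has_integral_affine_powr: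
  fixes p q \<beta> a b :: real
  assumes "a \<le> b" "q \<noteq> 0" "\<beta> \<noteq> 1" and pos: "\<And>x. x \<in> {a..b} \<Longrightarrow> p + q * x > 0"
  shows "((\<lambda>x. (p + q * x) powr (-\<beta>)) has_integral
           ((p + q * a) powr (1 - \<beta>) - (p + q * b) powr (1 - \<beta>)) / (q * (\<beta> - 1))) {a..b}"
proof -
  define F where "F x = - ((p + q * x) powr (1 - \<beta>)) / (q * (\<beta> - 1))" for x
  have "((\<lambda>x. (p + q * x) powr (-\<beta>)) has_integral (F b - F a)) {a..b}"
  proof (rule fundamental_theorem_of_calculus[OF \<open>a \<le> b\<close>])
    fix x assume x: "x \<in> {a..b}"
    have "(F has_real_derivative - ((1 - \<beta>) * (p + q * x) powr (1 - \<beta> - 1) * q) / (q * (\<beta> - 1))) (at x)"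
      unfolding F_def using pos[OF x] \<open>\<beta> \<noteq> 1\<close> by (auto intro!: derivative_eq_intros)
    moreover have "- ((1 - \<beta>) * (p + q * x) powr (1 - \<beta> - 1) * q) / (q * (\<beta> - 1)) = (p + q * x) powr (-\<beta>)"
      using assms by (simp add: field_simps)
    ultimately show "(F has_vector_derivative (p + q * x) powr (-\<beta>)) (at x within {a..b})"
      by (simp add: has_real_derivative_iff_has_vector_derivative[symmetric] has_field_derivative_at_within)
  qed
  then show ?thesis by (simp add: F_def diff_divide_distrib)
qed

lemma norm_one_minus_circlepath_powr_le:
  assumes r: "1/2 \<le> r" "r < 1" and x: "x \<in> {0..1}" and "0 \<le> \<beta>"
  shows "norm (1 - circlepath 0 r x) powr (-\<beta>)
    \<le> pi powr \<beta> * ((1 - r + 2*pi*x) powr (-\<beta>) + (1 - r + 2*pi + (-2*pi)*x) powr (-\<beta>))"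
proof -
  define \<theta> where "\<theta> = 2 * pi * x"
  define \<phi> where "\<phi> = min \<theta> (2 * pi - \<theta>)"
  have \<theta>: "0 \<le> \<theta>" "\<theta> \<le> 2 * pi" using x by (auto simp: \<theta>_def)
  have pos: "0 < (1 - r + \<phi>) / pi" using r \<theta> by (simp add: \<phi>_def)
  have "circlepath 0 r x = of_real r * exp (\<i> * of_real \<theta>)"
    by (simp add: circlepath \<theta>_def algebra_simps)
  then have "(1 - r + \<phi>) / pi \<le> norm (1 - circlepath 0 r x)"
    using norm_one_minus_of_real_mult_exp_ge[OF r \<theta>] by (simp add: \<phi>_def)
  then have "norm (1 - circlepath 0 r x) powr (-\<beta>) \<le> ((1 - r + \<phi>) / pi) powr (-\<beta>)"
    using pos \<open>0 \<le> \<beta>\<close> by (intro powr_mono2') auto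
  also have "\<dots> = pi powr \<beta> * (1 - r + \<phi>) powr (-\<beta>)"
    using pos by (simp add: powr_divide powr_minus field_simps)
  also have "(1 - r + \<phi>) powr (-\<beta>) \<le> (1 - r + \<theta>) powr (-\<beta>) + (1 - r + (2 * pi - \<theta>)) powr (-\<beta>)"
    by (simp add: \<phi>_def min_def)
  finally show ?thesis
    by (simp add: \<theta>_def algebra_simps mult_left_mono)
qed

lemma integral_circle_majorant_le:
  fixes \<delta> \<beta> :: real
  assumes \<delta>: "\<delta> > 0" and \<beta>: "\<beta> > 1"
  shows "(\<lambda>x. (\<delta> + 2*pi*x) powr (-\<beta>) + (\<delta> + 2*pi + (-2*pi)*x) powr (-\<beta>)) integrable_on {0..1}"
    and "integral {0..1} (\<lambda>x. (\<delta> + 2*pi*x) powr (-\<beta>) + (\<delta> + 2*pi + (-2*pi)*x) powr (-\<beta>))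
      \<le> \<delta> powr (1 - \<beta>) / (pi * (\<beta> - 1))"
proof -
  define V where "V = (\<delta> powr (1 - \<beta>) - (\<delta> + 2*pi) powr (1 - \<beta>)) / (2 * pi * (\<beta> - 1))"
  have "0 < \<delta> + 2*pi*x" "0 < \<delta> + 2*pi + (-2*pi)*x" if "x \<in> {0..1}" for x
  proof -
    have "0 \<le> 2*pi*x" "2*pi*x \<le> 2*pi" using that by auto
    then show "0 < \<delta> + 2*pi*x" "0 < \<delta> + 2*pi + (-2*pi)*x" using \<delta> by linarith+
  qed
  moreover have "V = ((\<delta> + 2*pi) powr (1 - \<beta>) - \<delta> powr (1 - \<beta>)) / (-2*pi * (\<beta> - 1))"
    unfolding V_def using \<beta> by (simp add: field_simps)
  ultimately have "((\<lambda>x. (\<delta> + 2*pi*x) powr (-\<beta>)) has_integral V) {0..1}"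
    and "((\<lambda>x. (\<delta> + 2*pi + (-2*pi)*x) powr (-\<beta>)) has_integral V) {0..1}"
    using has_integral_affine_powr[of 0 1 "2*pi" \<beta> \<delta>]
      has_integral_affine_powr[of 0 1 "-2*pi" \<beta> "\<delta> + 2*pi"] \<beta>
    by (auto simp: V_def)
  then have I: "((\<lambda>x. (\<delta> + 2*pi*x) powr (-\<beta>) + (\<delta> + 2*pi + (-2*pi)*x) powr (-\<beta>)) has_integral (V + V)) {0..1}"
    by (rule has_integral_add)
  then show "(\<lambda>x. (\<delta> + 2*pi*x) powr (-\<beta>) + (\<delta> + 2*pi + (-2*pi)*x) powr (-\<beta>)) integrable_on {0..1}"
    by blast
  have "V \<le> \<delta> powr (1 - \<beta>) / (2 * pi * (\<beta> - 1))"
    unfolding V_def using \<beta> by (intro divide_right_mono) auto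
  then have "V + V \<le> \<delta> powr (1 - \<beta>) / (pi * (\<beta> - 1))"
    using \<beta> by (simp add: field_simps)
  then show "integral {0..1} (\<lambda>x. (\<delta> + 2*pi*x) powr (-\<beta>) + (\<delta> + 2*pi + (-2*pi)*x) powr (-\<beta>))
      \<le> \<delta> powr (1 - \<beta>) / (pi * (\<beta> - 1))"
    using integral_unique[OF I] by simp
qed

lemma norm_Cauchy_integrand_circlepath_le:
  fixes H :: "complex \<Rightarrow> complex"
  assumes bound: "\<And>t. 1/2 \<le> norm t \<Longrightarrow> norm t < 1 \<Longrightarrow> norm (H t) \<le> M * norm (1 - t) powr (-\<beta>)"
    and "\<beta> \<ge> 0" "M \<ge> 0" and r: "1/2 \<le> r" "r < 1" and x: "x \<in> {0..1}"
  shows "norm (H (circlepath 0 r x) / (circlepath 0 r x - 0) ^ Suc j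
           * vector_derivative (circlepath 0 r) (at x within {0..1}))
    \<le> 2 * pi * M * pi powr \<beta> / r ^ j
       * ((1 - r + 2*pi*x) powr (-\<beta>) + (1 - r + 2*pi + (-2*pi)*x) powr (-\<beta>))"
proof -
  have "r > 0" using r by simp
  have "norm (circlepath 0 r x) = r" using \<open>r > 0\<close> by (simp add: circlepath norm_mult)
  moreover have "norm (vector_derivative (circlepath 0 r) (at x within {0..1})) = 2 * pi * r"
    using x \<open>r > 0\<close> by (simp add: vector_derivative_circlepath01 norm_mult)
  ultimately have "norm (H (circlepath 0 r x) / (circlepath 0 r x - 0) ^ Suc j
           * vector_derivative (circlepath 0 r) (at x within {0..1}))
      = 2 * pi / r ^ j * norm (H (circlepath 0 r x))"
    using \<open>r > 0\<close> by (simp add: norm_mult norm_divide norm_power field_simps)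
  also have "\<dots> \<le> 2 * pi / r ^ j * (M * (pi powr \<beta>
       * ((1 - r + 2*pi*x) powr (-\<beta>) + (1 - r + 2*pi + (-2*pi)*x) powr (-\<beta>))))"
  proof (intro mult_left_mono)
    show "norm (H (circlepath 0 r x)) \<le> M * (pi powr \<beta>
       * ((1 - r + 2*pi*x) powr (-\<beta>) + (1 - r + 2*pi + (-2*pi)*x) powr (-\<beta>)))"
      using bound[of "circlepath 0 r x"] norm_one_minus_circlepath_powr_le[OF r x \<open>\<beta> \<ge> 0\<close>]
        \<open>norm (circlepath 0 r x) = r\<close> r \<open>M \<ge> 0\<close>
      by simp (meson mult_left_mono order_trans)
  qed (use \<open>r > 0\<close> in auto)
  finally show ?thesis by simp
qed

(* Bounding |H| on the circle by its maximum M (1 - r) powr (- beta) would lose a factor 1 - r;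
   integrating the majorant is what yields the exponent beta - 1 below. *)
lemma Cauchy_coefficient_bound_powr:
  fixes H :: "complex \<Rightarrow> complex"
  assumes holo: "H holomorphic_on ball 0 1"
    and bound: "\<And>t. 1/2 \<le> norm t \<Longrightarrow> norm t < 1 \<Longrightarrow> norm (H t) \<le> M * norm (1 - t) powr (-\<beta>)"
    and \<beta>: "\<beta> > 1" and M: "M \<ge> 0" and r: "1/2 \<le> r" "r < 1"
  shows "norm ((deriv ^^ j) H 0 / fact j) \<le> M * pi powr \<beta> * (1 - r) powr (1 - \<beta>) / (r ^ j * pi * (\<beta> - 1))"
proof -
  define \<delta> where "\<delta> = 1 - r"
  have \<delta>: "\<delta> > 0" and "r > 0" using r by (auto simp: \<delta>_def)
  define f where "f x = H (circlepath 0 r x) / (circlepath 0 r x - 0) ^ Suc j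
                  * vector_derivative (circlepath 0 r) (at x within {0..1})" for x
  define g where "g x = (\<delta> + 2*pi*x) powr (-\<beta>) + (\<delta> + 2*pi + (-2*pi)*x) powr (-\<beta>)" for x
  define C0 where "C0 = 2 * pi * M * pi powr \<beta> / r ^ j"
  have "cball 0 r \<subseteq> ball (0::complex) 1" using r by auto
  then have "continuous_on (cball 0 r) H" "H holomorphic_on ball 0 r"
    using holomorphic_on_subset[OF holo] ball_subset_cball
    by (blast intro: holomorphic_on_imp_continuous_on)+
  then have "((\<lambda>u. H u / (u - 0) ^ Suc j) has_contour_integral (2 * pi * \<i> / fact j * (deriv ^^ j) H 0))
      (circlepath 0 r)"
    using \<open>r > 0\<close> by (intro Cauchy_has_contour_integral_higher_derivative_circlepath) auto
  then have f: "(f has_integral (2 * pi * \<i> / fact j * (deriv ^^ j) H 0)) {0..1}"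
    unfolding has_contour_integral_def f_def[abs_def] by simp
  have "norm (f x) \<le> C0 * g x" if "x \<in> {0..1}" for x
    using norm_Cauchy_integrand_circlepath_le[OF bound _ M r that, of j] \<beta>
    by (simp add: f_def g_def C0_def \<delta>_def)
  then have "norm (integral {0..1} f) \<le> integral {0..1} (\<lambda>x. C0 * g x)"
    using integrable_on_mult_right[OF integral_circle_majorant_le(1)[OF \<delta> \<beta>], of C0]
      has_integral_integrable[OF f]
    by (intro integral_norm_bound_integral) (auto simp: g_def)
  also have "\<dots> = C0 * integral {0..1} g"
    by simp
  also have "\<dots> \<le> C0 * (\<delta> powr (1 - \<beta>) / (pi * (\<beta> - 1)))"
    unfolding g_def by (intro mult_left_mono integral_circle_majorant_le(2)[OF \<delta> \<beta>])
      (use M \<open>r > 0\<close> in \<open>simp add: C0_def\<close>)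
  finally have "2 * pi * norm ((deriv ^^ j) H 0 / fact j) \<le> C0 * (\<delta> powr (1 - \<beta>) / (pi * (\<beta> - 1)))"
    by (simp add: integral_unique[OF f] norm_mult norm_divide)
  also have "\<dots> = 2 * pi * (M * pi powr \<beta> * (1 - r) powr (1 - \<beta>) / (r ^ j * pi * (\<beta> - 1)))"
    by (simp add: C0_def \<delta>_def)
  finally show ?thesis by (rule mult_left_le_imp_le) simp
qed

lemma power_series_unit_disc:
  fixes H :: "complex \<Rightarrow> complex" and c :: "nat \<Rightarrow> complex"
  assumes ser: "\<And>t. t \<in> ball 0 1 \<Longrightarrow> (\<lambda>j. c j * t ^ j) sums H t"
  shows "H holomorphic_on ball 0 1" and "c j = (deriv ^^ j) H 0 / fact j"
proof -
  define P where "P = Abs_fps c"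
  have "conv_radius c \<ge> 1"
    by (rule conv_radius_geI_ex') (use ser in \<open>auto simp: sums_iff\<close>)
  have radius: "ball 0 1 \<subseteq> eball (0::complex) (fps_conv_radius P)"
  proof
    fix t :: complex assume "t \<in> ball 0 1"
    then have "ereal (dist 0 t) < 1" by simp
    also have "\<dots> \<le> fps_conv_radius P" using \<open>conv_radius c \<ge> 1\<close> by (simp add: P_def fps_conv_radius_def)
    finally show "t \<in> eball 0 (fps_conv_radius P)" by simp
  qed
  have eval: "eval_fps P t = H t" if "t \<in> ball 0 1" for t
    using ser[OF that] by (simp add: eval_fps_def P_def sums_iff)
  show "H holomorphic_on ball 0 1"
    using holomorphic_transform[OF holomorphic_on_eval_fps[OF radius]] eval by metis
  have "H has_fps_expansion P"
    unfolding has_fps_expansion_def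
  proof
    show "fps_conv_radius P > 0"
      using less_le_trans[of 0 "1::ereal", OF _ \<open>conv_radius c \<ge> 1\<close>]
      by (simp add: P_def fps_conv_radius_def)
    show "eventually (\<lambda>z. eval_fps P z = H z) (nhds 0)"
      using eval by (intro eventually_nhds_in_open[of "ball 0 1", THEN eventually_mono]) auto
  qed
  from fps_nth_fps_expansion[OF this, of j] show "c j = (deriv ^^ j) H 0 / fact j"
    by (simp add: P_def)
qed

lemma power_series_coefficient_bound_powr:
  fixes H :: "complex \<Rightarrow> complex" and c :: "nat \<Rightarrow> complex"
  assumes ser: "\<And>t. t \<in> ball 0 1 \<Longrightarrow> (\<lambda>j. c j * t ^ j) sums H t"
    and bound: "\<And>t. 1/2 \<le> norm t \<Longrightarrow> norm t < 1 \<Longrightarrow> norm (H t) \<le> M * norm (1 - t) powr (-\<beta>)"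
    and \<beta>: "\<beta> > 1" and M: "M \<ge> 0"
  shows "norm (c j) \<le> 3 * M * pi powr \<beta> / (pi * (\<beta> - 1)) * (real j + 2) powr (\<beta> - 1)"
proof -
  define r where "r = 1 - 1 / (real j + 2)"
  have r: "1/2 \<le> r" "r < 1" by (auto simp: r_def field_simps)
  have "1 / r ^ j \<le> 3"
  proof -
    have "1 / r = 1 + 1 / (real j + 1)" by (simp add: r_def field_simps)
    also have "\<dots> \<le> exp (1 / (real j + 1))" by (rule exp_ge_add_one_self)
    finally have "(1 / r) ^ j \<le> exp (1 / (real j + 1)) ^ j"
      using r by (intro power_mono) auto
    also have "\<dots> = exp (real j / (real j + 1))"
      by (simp add: exp_of_nat_mult[symmetric])
    also have "\<dots> \<le> exp 1" by simp
    also have "\<dots> \<le> 3" by (rule exp_le)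
    finally show ?thesis by (simp add: power_one_over)
  qed
  have "norm (c j) \<le> M * pi powr \<beta> * (1 - r) powr (1 - \<beta>) / (r ^ j * pi * (\<beta> - 1))"
    using Cauchy_coefficient_bound_powr[OF power_series_unit_disc(1)[OF ser] bound \<beta> M r]
      power_series_unit_disc(2)[OF ser] by simp
  also have "(1 - r) powr (1 - \<beta>) = (real j + 2) powr (\<beta> - 1)"
    by (simp add: r_def powr_divide powr_minus_divide[symmetric] powr_minus)
  also have "M * pi powr \<beta> * (real j + 2) powr (\<beta> - 1) / (r ^ j * pi * (\<beta> - 1))
      = 1 / r ^ j * (M * pi powr \<beta> / (pi * (\<beta> - 1)) * (real j + 2) powr (\<beta> - 1))"
    by simp
  also have "\<dots> \<le> 3 * (M * pi powr \<beta> / (pi * (\<beta> - 1)) * (real j + 2) powr (\<beta> - 1))"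
    using \<open>1 / r ^ j \<le> 3\<close> M \<beta> by (intro mult_right_mono) auto
  finally show ?thesis by simp
qed

section \<open>The residue components of the Borel transform\<close>

lemma exp_fraction_power_mult_exp:
  fixes z :: complex
  assumes "l \<le> m" "m > 0"
  shows "exp (of_real (real l / real m - 1) * z) ^ m * exp (of_nat (m - l) * z) = 1"
proof -
  have sum_zero: "of_nat m * (of_real (real l / real m - 1) :: complex) + of_nat (m - l) = 0"
    using assms by (simp add: of_nat_diff field_simps)
  have "exp (of_real (real l / real m - 1) * z) ^ m * exp (of_nat (m - l) * z)
      = exp (of_nat m * (of_real (real l / real m - 1) * z)) * exp (of_nat (m - l) * z)"
    by (simp only: exp_of_nat_mult)
  also have "\<dots> = exp ((of_nat m * of_real (real l / real m - 1) + of_nat (m - l)) * z)"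
    by (simp only: exp_add[symmetric] distrib_right mult.assoc)
  finally show ?thesis using sum_zero by simp
qed

lemma powr_fraction_power_cancel:
  fixes q w X :: complex
  assumes "q \<noteq> 0" "l \<le> m" "m > 0"
  shows "(q powr of_real (real l / real m - 1) * X) ^ m * q ^ (m - l)
    = exp (of_nat (m - l) * w) * (exp (of_real (real l / real m - 1) * w) * X) ^ m"
proof -
  have "(q powr of_real (real l / real m - 1) * X) ^ m * q ^ (m - l)
      = X ^ m * (exp (of_real (real l / real m - 1) * Ln q) ^ m * exp (of_nat (m - l) * Ln q))"
    using assms(1) by (simp add: powr_def power_mult_distrib exp_of_nat_mult)
  also have "\<dots> = exp (of_real (real l / real m - 1) * w) ^ m * exp (of_nat (m - l) * w) * X ^ m"
    using exp_fraction_power_mult_exp[of l m "Ln q"] exp_fraction_power_mult_exp[of l m w] assms(2,3)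
    by simp
  finally show ?thesis by (simp add: power_mult_distrib mult_ac)
qed

locale borel_transform =
  fixes m :: nat and a :: "nat \<Rightarrow> complex" and F :: "complex \<Rightarrow> complex" and A B :: real
  assumes m_pos: "m \<ge> 1"
    and F_holo: "F holomorphic_on Omega_log"
    and F_borel: "\<exists>\<rho>>0. \<forall>w\<in>Omega_log. norm (exp w) < \<rho> \<longrightarrow>
        (\<lambda>n. a (Suc n) * exp (of_real (real (Suc n) / real m - 1) * w)
                / of_real (Gamma (real (Suc n) / real m))) sums F w"
    and F_bound: "\<And>w. w \<in> Omega_log \<Longrightarrow>
        norm (F w) * exp ((real m - 1) / real m * Re w) \<le> A * exp (B * norm (exp w))"
    and A_pos: "A > 0" and B_pos: "B > 0"
begin

definition borel_term :: "complex \<Rightarrow> nat \<Rightarrow> complex" where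
  "borel_term w n = a (Suc n) * exp (of_real (real (Suc n) / real m - 1) * w)
                / of_real (Gamma (real (Suc n) / real m))"

definition residue_component :: "nat \<Rightarrow> complex \<Rightarrow> complex" where
  "residue_component l w = (\<Sum>j<m. cis (- 2 * pi * j * l / m) * F (w + 2 * pi * \<i> * j)) / m"

lemma borel_term_add_2pi_i:
  fixes j :: nat
  shows "borel_term (w + 2 * pi * \<i> * j) n = cis (2 * pi * j / m) * (borel_term w n * cis (2 * pi * j * n / m))"
proof -
  have "of_real (real (Suc n) / real m - 1) * (2 * pi * \<i> * j)
      = \<i> * of_real (2 * pi * j / m + 2 * pi * j * n / m - 2 * pi * j)"
    using m_pos by (simp add: field_simps)
  then have "exp (of_real (real (Suc n) / real m - 1) * (2 * pi * \<i> * j))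
      = cis (2 * pi * j / m + 2 * pi * j * n / m - 2 * pi * j)"
    by (simp only: cis_conv_exp)
  also have "\<dots> = cis (2 * pi * j / m) * cis (2 * pi * j * n / m)"
    by (simp add: cis_divide[symmetric] cis_mult)
  finally show ?thesis
    by (simp add: borel_term_def distrib_left exp_add)
qed

lemma borel_term_residue_class:
  assumes l: "l \<in> {1..m}"
  shows "borel_term w (l - 1 + m * k) = exp (of_real (real l / real m - 1) * w)
    * (a (l + m * k) * exp w ^ k / of_real (Gamma (real l / real m + real k)))"
proof -
  have "Suc (l - 1 + m * k) = l + m * k" using l by simp
  moreover have "real (l + m * k) / real m = real l / real m + real k"
    using m_pos by (simp add: field_simps)
  moreover have "of_real (real l / real m + real k - 1) * w = of_real (real l / real m - 1) * w + of_nat k * w"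
    by (simp add: algebra_simps)
  ultimately show ?thesis
    by (simp add: borel_term_def exp_add exp_of_nat_mult)
qed

lemma residue_component_holomorphic: "residue_component l holomorphic_on Omega_log"
proof -
  have "(F \<circ> (\<lambda>w. w + 2 * pi * \<i> * of_nat j)) holomorphic_on Omega_log" for j
    by (rule holomorphic_on_compose_gen[OF _ F_holo])
      (use Omega_log_add_2pi_i in \<open>auto intro!: holomorphic_intros\<close>)
  then show ?thesis
    unfolding residue_component_def[abs_def] using m_pos by (intro holomorphic_intros) (auto simp: o_def)
qed

lemma norm_residue_component_le:
  assumes w: "w \<in> Omega_log"
  shows "norm (residue_component l w) * exp ((real m - 1) / real m * Re w) \<le> A * exp (B * norm (exp w))"
proof -
  define e where "e = exp ((real m - 1) / real m * Re w)"
  define S where "S = (\<Sum>j<m. cis (- 2 * pi * j * l / m) * F (w + 2 * pi * \<i> * j))"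
  have "norm S * e \<le> (\<Sum>j<m. norm (cis (- 2 * pi * j * l / m) * F (w + 2 * pi * \<i> * j))) * e"
    unfolding S_def e_def by (intro mult_right_mono norm_sum) simp
  also have "\<dots> = (\<Sum>j<m. norm (F (w + 2 * pi * \<i> * j)) * e)"
    by (simp add: norm_mult sum_distrib_right)
  also have "\<dots> \<le> of_nat (card {..<m}) * (A * exp (B * norm (exp w)))"
    by (rule sum_bounded_above)
      (use F_bound[OF Omega_log_add_2pi_i[OF w]] in \<open>simp add: e_def exp_add_2pi_i_of_nat\<close>)
  finally have "norm S * e \<le> m * (A * exp (B * norm (exp w)))" by simp
  moreover have "norm (residue_component l w) * e = norm S * e / m"
    by (simp add: residue_component_def S_def norm_divide)
  ultimately show ?thesis
    unfolding e_def[symmetric] using m_pos by (simp add: pos_divide_le_eq mult.commute)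
qed

lemma residue_component_sums:
  assumes l: "l \<in> {1..m}"
    and shifts: "\<And>j::nat. borel_term (w + 2 * pi * \<i> * j) sums F (w + 2 * pi * \<i> * j)"
  shows "(\<lambda>k. exp (of_real (real l / real m - 1) * w)
            * (a (l + m * k) * exp w ^ k / of_real (Gamma (real l / real m + real k))))
        sums residue_component l w"
proof -
  have twisted: "(\<lambda>n. borel_term w n * cis (2 * pi * j * n / m)) sums (cis (- 2 * pi * j / m) * F (w + 2 * pi * \<i> * j))"
    for j :: nat
    using sums_mult[OF shifts[of j, unfolded borel_term_add_2pi_i], of "cis (- 2 * pi * j / m)"]
    by (simp add: cis_mult mult.assoc[symmetric])
  have merge: "cis (- 2 * pi * j * real (l - 1) / m) * cis (- 2 * pi * j / m) = cis (- 2 * pi * j * l / m)"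
    for j :: nat
  proof -
    have "- 2 * pi * j * real (l - 1) / m + - 2 * pi * j / m = - 2 * pi * j * l / m"
      using l by (simp add: of_nat_diff field_simps)
    then show ?thesis by (simp add: cis_mult)
  qed
  have "l - 1 < m" using l by auto
  from sums_residue_class[OF this twisted]
  have "(\<lambda>k. borel_term w (l - 1 + m * k)) sums
      ((\<Sum>j<m. cis (- 2 * pi * j * real (l - 1) / m) * cis (- 2 * pi * j / m) * F (w + 2 * pi * \<i> * j)) / m)"
    by (simp add: mult.assoc)
  also have "\<dots> = residue_component l w"
    by (simp only: merge residue_component_def)
  finally show ?thesis
    unfolding borel_term_residue_class[OF l] .
qed

end

locale borel_residue = borel_transform +
  fixes l :: nat and G :: "complex \<Rightarrow> complex"
  assumes l: "l \<in> {1..m}"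
    and G_holo: "G holomorphic_on Delta"
    and G_germ: "\<exists>\<rho>>0. \<forall>\<xi>. 0 < norm \<xi> \<and> norm \<xi> < \<rho> \<longrightarrow>
        summable (\<lambda>k. a (l + m * k) * \<xi> ^ k / of_real (Gamma (real l / real m + real k))) \<and>
        G \<xi> = (\<xi> / (1 - exp (- \<xi>))) powr of_real (real l / real m - 1)
          * (\<Sum>k. a (l + m * k) * \<xi> ^ k / of_real (Gamma (real l / real m + real k)))"
begin

lemma G_power_eq_near_zero:
  obtains c where "\<And>w. w \<in> Omega_log \<Longrightarrow> Re w < c \<Longrightarrow>
    G (exp w) ^ m * (exp w / (1 - exp (- exp w))) ^ (m - l)
      = exp (of_nat (m - l) * w) * residue_component l w ^ m"
proof -
  obtain \<rho>1 where "\<rho>1 > 0" and \<rho>1: "\<And>w. w \<in> Omega_log \<Longrightarrow> norm (exp w) < \<rho>1 \<Longrightarrow> borel_term w sums F w"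
    using F_borel unfolding borel_term_def[abs_def] by blast
  obtain \<rho>2 where "\<rho>2 > 0" and \<rho>2: "\<And>\<xi>. 0 < norm \<xi> \<and> norm \<xi> < \<rho>2 \<Longrightarrow>
        summable (\<lambda>k. a (l + m * k) * \<xi> ^ k / of_real (Gamma (real l / real m + real k))) \<and>
        G \<xi> = (\<xi> / (1 - exp (- \<xi>))) powr of_real (real l / real m - 1)
          * (\<Sum>k. a (l + m * k) * \<xi> ^ k / of_real (Gamma (real l / real m + real k)))"
    using G_germ by blast
  have "G (exp w) ^ m * (exp w / (1 - exp (- exp w))) ^ (m - l)
      = exp (of_nat (m - l) * w) * residue_component l w ^ m"
    if w: "w \<in> Omega_log" "Re w < ln (min \<rho>1 \<rho>2)" for w
  proof -
    define \<xi> where "\<xi> = exp w"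
    define X where "X = (\<Sum>k. a (l + m * k) * \<xi> ^ k / of_real (Gamma (real l / real m + real k)))"
    define E where "E = exp (of_real (real l / real m - 1) * w)"
    define q where "q = \<xi> / (1 - exp (- \<xi>))"
    have "q \<noteq> 0" using Omega_logD[OF w(1)] by (simp add: q_def \<xi>_def)
    have "norm \<xi> = exp (Re w)" by (simp add: \<xi>_def)
    also have "\<dots> < exp (ln (min \<rho>1 \<rho>2))" using w(2) by simp
    also have "\<dots> = min \<rho>1 \<rho>2" using \<open>\<rho>1 > 0\<close> \<open>\<rho>2 > 0\<close> by simp
    finally have "norm \<xi> < min \<rho>1 \<rho>2" .
    then have "summable (\<lambda>k. a (l + m * k) * \<xi> ^ k / of_real (Gamma (real l / real m + real k)))"
      and G\<xi>: "G \<xi> = q powr of_real (real l / real m - 1) * X"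
      using \<rho>2[of \<xi>] by (auto simp: \<xi>_def X_def q_def)
    then have "(\<lambda>k. E * (a (l + m * k) * \<xi> ^ k / of_real (Gamma (real l / real m + real k)))) sums (E * X)"
      unfolding X_def by (intro sums_mult summable_sums)
    moreover have "borel_term (w + 2 * pi * \<i> * j) sums F (w + 2 * pi * \<i> * j)" for j :: nat
      using \<rho>1[OF Omega_log_add_2pi_i[OF w(1)]] \<open>norm \<xi> < min \<rho>1 \<rho>2\<close>
      by (simp add: \<xi>_def exp_add_2pi_i_of_nat)
    from residue_component_sums[OF l this]
    have "(\<lambda>k. E * (a (l + m * k) * \<xi> ^ k / of_real (Gamma (real l / real m + real k))))
        sums residue_component l w"
      by (simp add: E_def \<xi>_def)
    ultimately have "residue_component l w = E * X"
      by (rule sums_unique2[symmetric])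
    then show ?thesis
      unfolding \<xi>_def[symmetric] q_def[symmetric] G\<xi>
      using powr_fraction_power_cancel[OF \<open>q \<noteq> 0\<close>, of l m X w] l m_pos by (simp add: E_def)
  qed
  then show thesis by (rule that)
qed

lemma G_power_eq:
  assumes w: "w \<in> Omega_log"
  shows "G (exp w) ^ m * (exp w / (1 - exp (- exp w))) ^ (m - l)
    = exp (of_nat (m - l) * w) * residue_component l w ^ m"
proof -
  define f where "f w = G (exp w) ^ m * (exp w / (1 - exp (- exp w))) ^ (m - l)
    - exp (of_nat (m - l) * w) * residue_component l w ^ m" for w
  obtain c where "\<And>w. w \<in> Omega_log \<Longrightarrow> Re w < c \<Longrightarrow> f w = 0"
    using G_power_eq_near_zero unfolding f_def by (metis eq_iff_diff_eq_0)
  moreover have "f holomorphic_on Omega_log"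
  proof -
    have "(G \<circ> exp) holomorphic_on Omega_log"
      by (rule holomorphic_on_compose_gen[OF _ G_holo]) (auto intro!: holomorphic_intros simp: Omega_logD)
    then show ?thesis
      unfolding f_def[abs_def] using Omega_logD residue_component_holomorphic
      by (auto intro!: holomorphic_intros simp: o_def)
  qed
  ultimately have "f w = 0"
    using holomorphic_vanishing_on_left_half_plane[OF _ open_Omega_log Omega_log_diff_of_real _ w] by metis
  then show ?thesis by (simp add: f_def)
qed

lemma norm_G_le:
  assumes \<xi>: "\<xi> \<in> Delta" "\<xi> \<noteq> 0"
  shows "norm (G \<xi>) * norm \<xi> powr ((real m - 1) / real m) \<le> A * exp (B * norm \<xi>)"
proof -
  define w where "w = Ln \<xi>"
  have "exp w = \<xi>" "w \<in> Omega_log" using \<xi> by (auto simp: w_def Omega_log_def)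
  define P where "P = residue_component l w"
  define D where "D = norm (1 - exp (- \<xi>))"
  have "0 < D" "D < 1"
    using exp_minus_neq_1_in_Delta[OF \<xi>] \<xi>(1) by (auto simp: D_def Delta_eq dist_norm)
  have "G \<xi> ^ m * (\<xi> / (1 - exp (- \<xi>))) ^ (m - l) = \<xi> ^ (m - l) * P ^ m"
    using G_power_eq[OF \<open>w \<in> Omega_log\<close>] by (simp add: \<open>exp w = \<xi>\<close> P_def exp_of_nat_mult)
  then have "norm (G \<xi>) ^ m * (norm \<xi> / D) ^ (m - l) = norm \<xi> ^ (m - l) * norm P ^ m"
    unfolding D_def by (metis norm_divide norm_mult norm_power)
  then have "norm \<xi> ^ (m - l) * norm (G \<xi>) ^ m = norm \<xi> ^ (m - l) * (D ^ (m - l) * norm P ^ m)"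
    using \<open>0 < D\<close> by (simp add: power_divide field_simps)
  then have "norm (G \<xi>) ^ m = D ^ (m - l) * norm P ^ m"
    using \<xi>(2) by simp
  also have "\<dots> \<le> norm P ^ m"
    using \<open>0 < D\<close> \<open>D < 1\<close> by (intro mult_left_le_one_le power_le_one) auto
  finally have "norm (G \<xi>) ^ Suc (m - 1) \<le> norm P ^ Suc (m - 1)"
    using m_pos by simp
  then have "norm (G \<xi>) \<le> norm P"
    by (rule power_le_imp_le_base) simp
  then have "norm (G \<xi>) * exp ((real m - 1) / real m * Re w) \<le> norm P * exp ((real m - 1) / real m * Re w)"
    by (rule mult_right_mono) simp
  also have "\<dots> \<le> A * exp (B * norm \<xi>)"
    using norm_residue_component_le[OF \<open>w \<in> Omega_log\<close>, of l] by (simp add: P_def \<open>exp w = \<xi>\<close>)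
  also have "exp ((real m - 1) / real m * Re w) = norm \<xi> powr ((real m - 1) / real m)"
    using \<xi>(2) by (simp add: w_def powr_def)
  finally show ?thesis .
qed

lemma norm_G_minus_Ln_le:
  assumes s: "s \<in> ball 1 1" "1/2 \<le> norm (1 - s)" and "B \<le> \<beta>"
  shows "norm (G (- Ln s)) \<le> 3 * A * exp (B * pi) * 4 powr \<beta> * norm s powr (-\<beta>)"
proof -
  define \<xi> where "\<xi> = - Ln s"
  have "s \<noteq> 0" "norm s < 2"
    using s(1) norm_triangle_ineq2[of s 1] by (auto simp: dist_norm norm_minus_commute)
  have "\<xi> \<in> Delta" using s(1) by (auto simp: Delta_def \<xi>_def)
  have "1/3 \<le> norm \<xi>"
    using third_le_norm_if_half_le_norm_one_minus_exp[of "Ln s"] s(2) \<open>s \<noteq> 0\<close> by (simp add: \<xi>_def)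
  have "1/3 \<le> norm \<xi> powr ((real m - 1) / real m)"
  proof (cases "norm \<xi> \<le> 1")
    case True
    then have "norm \<xi> powr 1 \<le> norm \<xi> powr ((real m - 1) / real m)"
      using m_pos by (intro powr_mono') auto
    then show ?thesis using \<open>1/3 \<le> norm \<xi>\<close> \<open>\<xi> \<in> Delta\<close> by simp
  next
    case False
    then show ?thesis using ge_one_powr_ge_zero[of "norm \<xi>" "(real m - 1) / real m"] m_pos by simp
  qed
  then have "norm (G \<xi>) * (1/3) \<le> norm (G \<xi>) * norm \<xi> powr ((real m - 1) / real m)"
    by (rule mult_left_mono) simp
  also have "\<dots> \<le> A * exp (B * norm \<xi>)"
    using \<open>1/3 \<le> norm \<xi>\<close> by (intro norm_G_le \<open>\<xi> \<in> Delta\<close>) auto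
  finally have "norm (G \<xi>) \<le> 3 * A * exp (B * norm \<xi>)" by simp
  also have "exp (B * norm \<xi>) \<le> exp (B * pi) * 4 powr \<beta> * norm s powr (-\<beta>)"
    using exp_mult_norm_Ln_le[OF \<open>s \<noteq> 0\<close> \<open>norm s < 2\<close> _ \<open>B \<le> \<beta>\<close>] B_pos by (simp add: \<xi>_def)
  finally show ?thesis using A_pos by (simp add: \<xi>_def mult_ac)
qed

lemma residue_coefficients_bound:
  assumes d: "\<And>s. s \<in> ball 1 1 \<Longrightarrow> (\<lambda>j. d (l + m * j) * (1 - s) ^ j) sums G (- Ln s)"
    and "1 < \<beta>" "B \<le> \<beta>"
  shows "\<exists>K. \<forall>j. norm (d (l + m * j)) \<le> K * (real j + 2) powr (\<beta> - 1)"
proof -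
  define M where "M = 3 * A * exp (B * pi) * 4 powr \<beta>"
  have "norm (d (l + m * j)) \<le> 3 * M * pi powr \<beta> / (pi * (\<beta> - 1)) * (real j + 2) powr (\<beta> - 1)" for j
  proof (rule power_series_coefficient_bound_powr[where H = "\<lambda>t. G (- Ln (1 - t))"])
    show "(\<lambda>j. d (l + m * j) * t ^ j) sums G (- Ln (1 - t))" if "t \<in> ball 0 1" for t
      using d[of "1 - t"] that by (simp add: dist_norm)
    show "norm (G (- Ln (1 - t))) \<le> M * norm (1 - t) powr (-\<beta>)" if "1/2 \<le> norm t" "norm t < 1" for t
      using norm_G_minus_Ln_le[of "1 - t" \<beta>] that \<open>B \<le> \<beta>\<close> by (simp add: M_def dist_norm)
  qed (use \<open>1 < \<beta>\<close> A_pos in \<open>simp_all add: M_def\<close>)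
  then show ?thesis by blast
qed

end

theorem lemma5p4:
  fixes m :: nat and a :: "nat \<Rightarrow> complex" and F :: "complex \<Rightarrow> complex"
    and A B :: real and G :: "nat \<Rightarrow> complex \<Rightarrow> complex" and d :: "nat \<Rightarrow> complex"
  assumes m: "m \<ge> 1"
    and gev: "gevrey1 m a"
    and F_holo: "F holomorphic_on Omega_log"
    and F_periodic: "\<And>w. w \<in> Omega_log \<Longrightarrow> F (w + 2 * pi * \<i> * of_nat m) = F w"
    and F_borel: "\<exists>\<rho>>0. \<forall>w\<in>Omega_log. norm (exp w) < \<rho> \<longrightarrow>
        (\<lambda>n. a (Suc n) * exp (of_real (real (Suc n) / real m - 1) * w)
                / of_real (Gamma (real (Suc n) / real m))) sums F w"
    and AB: "A > 0" "B > 0"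
    and F_bound: "\<And>w. w \<in> Omega_log \<Longrightarrow>
        norm (F w) * exp ((real m - 1) / real m * Re w) \<le> A * exp (B * norm (exp w))"
    and G_holo: "\<And>l. l \<in> {1..m} \<Longrightarrow> G l holomorphic_on Delta"
    and G_germ: "\<And>l. l \<in> {1..m} \<Longrightarrow> \<exists>\<rho>>0. \<forall>\<xi>. 0 < norm \<xi> \<and> norm \<xi> < \<rho> \<longrightarrow>
        summable (\<lambda>k. a (l + m * k) * \<xi> ^ k / of_real (Gamma (real l / real m + real k))) \<and>
        G l \<xi> = (\<xi> / (1 - exp (- \<xi>))) powr of_real (real l / real m - 1)
          * (\<Sum>k. a (l + m * k) * \<xi> ^ k / of_real (Gamma (real l / real m + real k)))"
    and d_def: "\<And>l s. l \<in> {1..m} \<Longrightarrow> s \<in> ball 1 1 \<Longrightarrow>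
        (\<lambda>j. d (l + m * j) * (1 - s) ^ j) sums G l (- Ln s)"
  shows "\<forall>C. C > max B 1 \<longrightarrow>
    summable (\<lambda>n. norm (d (Suc n)) / (real (Suc n) / real m) powr C)"
proof (intro allI impI)
  fix C :: real assume "C > max B 1"
  define \<beta> where "\<beta> = (max B 1 + C) / 2"
  have \<beta>: "1 < \<beta>" "B \<le> \<beta>" "\<beta> < C" using \<open>C > max B 1\<close> by (auto simp: \<beta>_def)
  interpret borel_transform m a F A B
    using m F_holo F_borel F_bound AB by unfold_locales
  have "\<exists>K. \<forall>j. norm (d (l + m * j)) \<le> K * (real j + 2) powr (\<beta> - 1)" if l: "l \<in> {1..m}" for l
  proof -
    interpret borel_residue m a F A B l "G l"
      using l G_holo G_germ by unfold_locales
    show ?thesis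
      using d_def[OF l] \<beta> by (intro residue_coefficients_bound)
  qed
  then show "summable (\<lambda>n. norm (d (Suc n)) / (real (Suc n) / real m) powr C)"
    using m \<beta> by (intro summable_norm_div_powr_if_residue_classes_bounded) auto
qed

end
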